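(* Let $H$ be a connected simple matroid of rank $3$ and let $a,b\in E(H)$ (possibly $a=b$). Then there is a $4$-element circuit of $H$ containing $a$ and $b$, or $H$ is the parallel connection of two lines with base point $a$ or with base point $b$.
   Context: A line is a rank-$2$ flat; the parallel connection is the usual matroid parallel connection along a common base point. *)

theory Defs
  imports Main
begin

definition matroid :: "'a set \<Rightarrow> ('a set \<Rightarrow> bool) \<Rightarrow> bool" where
  "matroid E indep \<longleftrightarrow>
     finite E \<and> indep {} \<and>
     (\<forall>X. indep X \<longrightarrow> X \<subseteq> E) \<and>
     (\<forall>X Y. indep Y \<and> X \<subseteq> Y \<longrightarrow> indep X) \<and>
     (\<forall>X Y. indep X \<and> indep Y \<and> card X < card Y \<longrightarrow>
        (\<exists>y \<in> Y - X. indep (insert y X)))"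

definition mrank :: "('a set \<Rightarrow> bool) \<Rightarrow> 'a set \<Rightarrow> nat" where
  "mrank indep X = Max {card I | I. I \<subseteq> X \<and> indep I}"

definition circuit :: "'a set \<Rightarrow> ('a set \<Rightarrow> bool) \<Rightarrow> 'a set \<Rightarrow> bool" where
  "circuit E indep C \<longleftrightarrow> C \<subseteq> E \<and> \<not> indep C \<and> (\<forall>x \<in> C. indep (C - {x}))"

text \<open>Simple: no loops and no parallel pairs, i.e. no circuits with at most two elements.\<close>
definition simple_matroid :: "'a set \<Rightarrow> ('a set \<Rightarrow> bool) \<Rightarrow> bool" where
  "simple_matroid E indep \<longleftrightarrow> (\<forall>C. circuit E indep C \<longrightarrow> card C \<ge> 3)"

definition connected_matroid :: "'a set \<Rightarrow> ('a set \<Rightarrow> bool) \<Rightarrow> bool" where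
  "connected_matroid E indep \<longleftrightarrow>
     (\<forall>e \<in> E. \<forall>f \<in> E. e \<noteq> f \<longrightarrow> (\<exists>C. circuit E indep C \<and> e \<in> C \<and> f \<in> C))"

definition flat :: "'a set \<Rightarrow> ('a set \<Rightarrow> bool) \<Rightarrow> 'a set \<Rightarrow> bool" where
  "flat E indep X \<longleftrightarrow> X \<subseteq> E \<and> (\<forall>e \<in> E - X. mrank indep (insert e X) > mrank indep X)"

definition line :: "'a set \<Rightarrow> ('a set \<Rightarrow> bool) \<Rightarrow> 'a set \<Rightarrow> bool" where
  "line E indep L \<longleftrightarrow> flat E indep L \<and> mrank indep L = 2"

definition restr :: "('a set \<Rightarrow> bool) \<Rightarrow> 'a set \<Rightarrow> 'a set \<Rightarrow> bool" where
  "restr indep L = (\<lambda>X. indep X \<and> X \<subseteq> L)"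

text \<open>Circuits of the parallel connection P(M1,M2) of matroids M1 on E1, M2 on E2 with
  E1 \<inter> E2 = {p}, p neither a loop nor a coloop (Oxley, Prop. 7.1.13): circuits of M1,
  circuits of M2, and sets (C1 - p) \<union> (C2 - p) with p \<in> C1, C2 circuits of M1, M2.\<close>
definition pc_circuits ::
  "'a set \<Rightarrow> ('a set \<Rightarrow> bool) \<Rightarrow> 'a set \<Rightarrow> ('a set \<Rightarrow> bool) \<Rightarrow> 'a \<Rightarrow> 'a set set" where
  "pc_circuits E1 I1 E2 I2 p =
     {C. circuit E1 I1 C} \<union> {C. circuit E2 I2 C} \<union>
     {(C1 - {p}) \<union> (C2 - {p}) | C1 C2. circuit E1 I1 C1 \<and> circuit E2 I2 C2 \<and> p \<in> C1 \<and> p \<in> C2}"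

definition parallel_connection_of_two_lines :: "'a set \<Rightarrow> ('a set \<Rightarrow> bool) \<Rightarrow> 'a \<Rightarrow> bool" where
  "parallel_connection_of_two_lines E indep p \<longleftrightarrow>
     (\<exists>L1 L2. line E indep L1 \<and> line E indep L2 \<and> L1 \<inter> L2 = {p} \<and> L1 \<union> L2 = E \<and>
        {C. circuit E indep C} = pc_circuits L1 (restr indep L1) L2 (restr indep L2) p)"

end

theory Submission
  imports Defs
begin

text \<open>
  In a simple matroid of rank 3 every circuit has three or four elements, and four points no
  three of which are collinear form a circuit. For \<open>a \<noteq> b\<close> it therefore suffices to find points
  \<open>d \<noteq> e\<close> off the line \<open>ab\<close> whose line avoids \<open>a\<close> and \<open>b\<close>. If there are none, fix \<open>c\<close> off \<open>ab\<close>: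
  every point off \<open>ab\<close> then lies on \<open>ac\<close> or on \<open>bc\<close>. If one of these two lines contains all points
  off \<open>ab\<close>, the ground set is the union of two lines through \<open>a\<close> (or through \<open>b\<close>); otherwise points
  \<open>d \<in> bc - ac\<close> and \<open>e \<in> ac - bc\<close> would form such a pair. For \<open>a = b\<close>, connectivity yields a circuit
  through \<open>a\<close>; if it is a triangle \<open>{a, x, x'}\<close> and the ground set is not \<open>ax \<union> ay\<close> for some \<open>y\<close>
  off \<open>ax\<close>, then a point \<open>z\<close> off \<open>ax \<union> ay\<close>, the point \<open>y\<close>, and whichever of \<open>x, x'\<close> is off the line
  \<open>yz\<close> complete \<open>a\<close> to a 4-circuit. Finally, a union of two lines meeting only in \<open>p\<close> is their
  parallel connection at \<open>p\<close>: its circuits are the triangles inside either line and the sets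
  made of two points other than \<open>p\<close> from each line.
\<close>

locale indep_matroid =
  fixes E :: "'a set" and indep :: "'a set \<Rightarrow> bool"
  assumes matroid: "matroid E indep"
begin

lemma finite_ground: "finite E"
  using matroid unfolding matroid_def by blast

lemma indep_empty: "indep {}"
  using matroid unfolding matroid_def by blast

lemma indep_subset_ground: "indep X \<Longrightarrow> X \<subseteq> E"
  using matroid unfolding matroid_def by blast

lemma indep_subset: "indep Y \<Longrightarrow> X \<subseteq> Y \<Longrightarrow> indep X"
  using matroid unfolding matroid_def by blast

lemma indep_augment:
  "indep X \<Longrightarrow> indep Y \<Longrightarrow> card X < card Y \<Longrightarrow> \<exists>y \<in> Y - X. indep (insert y X)"
  using matroid unfolding matroid_def by blast

lemma finite_indep_cards: "finite {card I | I. I \<subseteq> X \<and> indep I}"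
proof -
  have "{card I | I. I \<subseteq> X \<and> indep I} \<subseteq> card ` Pow E"
    using indep_subset_ground by auto
  then show ?thesis
    using finite_ground by (meson finite_Pow_iff finite_imageI finite_subset)
qed

lemma card_le_mrank: "I \<subseteq> X \<Longrightarrow> indep I \<Longrightarrow> card I \<le> mrank indep X"
  unfolding mrank_def using Max_ge[OF finite_indep_cards] by blast

lemma ex_indep_card_mrank: "\<exists>I \<subseteq> X. indep I \<and> card I = mrank indep X"
proof -
  have "{card I | I. I \<subseteq> X \<and> indep I} \<noteq> {}"
    using indep_empty by auto
  then have "mrank indep X \<in> {card I | I. I \<subseteq> X \<and> indep I}"
    unfolding mrank_def using Max_in[OF finite_indep_cards] by blast
  then show ?thesis by auto
qed

lemma circuit_subset_ground: "circuit E indep C \<Longrightarrow> C \<subseteq> E"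
  unfolding circuit_def by blast

lemma finite_circuit: "circuit E indep C \<Longrightarrow> finite C"
  using circuit_subset_ground finite_ground finite_subset by blast

lemma indep_psubset_circuit:
  assumes "circuit E indep C" "D \<subset> C"
  shows "indep D"
proof -
  obtain z where "z \<in> C" "D \<subseteq> C - {z}"
    using assms(2) by blast
  then show ?thesis
    using assms(1) indep_subset unfolding circuit_def by blast
qed

lemma circuit_restr_iff:
  "L \<subseteq> E \<Longrightarrow> circuit L (restr indep L) C \<longleftrightarrow> C \<subseteq> L \<and> circuit E indep C"
  unfolding circuit_def restr_def by auto

end

locale simple_indep_matroid = indep_matroid +
  assumes simple: "simple_matroid E indep"
begin

lemma card_circuit_ge3: "circuit E indep C \<Longrightarrow> 3 \<le> card C"
  using simple unfolding simple_matroid_def by blast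

lemma indep_singleton: "x \<in> E \<Longrightarrow> indep {x}"
proof (rule ccontr)
  assume "x \<in> E" "\<not> indep {x}"
  then have "circuit E indep {x}"
    unfolding circuit_def using indep_empty by auto
  then show False using card_circuit_ge3 by fastforce
qed

lemma indep_pair: "x \<in> E \<Longrightarrow> y \<in> E \<Longrightarrow> indep {x, y}"
proof (rule ccontr)
  assume xy: "x \<in> E" "y \<in> E" "\<not> indep {x, y}"
  then have "x \<noteq> y" using indep_singleton by auto
  then have "circuit E indep {x, y}"
    unfolding circuit_def using xy indep_singleton by (auto simp: insert_Diff_if)
  then show False using card_circuit_ge3 \<open>x \<noteq> y\<close> by fastforce
qed

lemma circuit_triangle:
  assumes "u \<in> E" "v \<in> E" "w \<in> E" "u \<noteq> v" "u \<noteq> w" "v \<noteq> w" "\<not> indep {u, v, w}"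
  shows "circuit E indep {u, v, w}"
proof -
  have "{u, v, w} - {u} = {v, w}" "{u, v, w} - {v} = {u, w}" "{u, v, w} - {w} = {u, v}"
    using assms by auto
  then show ?thesis
    unfolding circuit_def using assms indep_pair by auto
qed

text \<open>For \<open>x \<noteq> y\<close> this is the closure of \<open>{x, y}\<close>, since pairs are independent.\<close>

definition line_through :: "'a \<Rightarrow> 'a \<Rightarrow> 'a set" where
  "line_through x y = {z \<in> E. z = x \<or> z = y \<or> \<not> indep {x, y, z}}"

lemma line_through_commute: "line_through x y = line_through y x"
  unfolding line_through_def by (auto simp: insert_commute)

lemma line_through_subset_ground: "line_through x y \<subseteq> E"
  unfolding line_through_def by auto

lemma left_mem_line_through: "x \<in> E \<Longrightarrow> x \<in> line_through x y"
  unfolding line_through_def by auto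

lemma right_mem_line_through: "y \<in> E \<Longrightarrow> y \<in> line_through x y"
  unfolding line_through_def by auto

lemma mem_line_throughI: "z \<in> E \<Longrightarrow> \<not> indep {x, y, z} \<Longrightarrow> z \<in> line_through x y"
  unfolding line_through_def by auto

lemma indep_triple_if_not_mem_line_through:
  "z \<in> E \<Longrightarrow> z \<notin> line_through x y \<Longrightarrow> indep {x, y, z}"
  unfolding line_through_def by auto

lemma dependent_triple_if_mem_line_through:
  "z \<in> line_through x y \<Longrightarrow> z \<noteq> x \<Longrightarrow> z \<noteq> y \<Longrightarrow> \<not> indep {x, y, z}"
  unfolding line_through_def by auto

lemma dependent_triple_exchange:
  assumes "\<not> indep {x, y, z}" "\<not> indep {x, y, w}" "x \<in> E" "y \<in> E"
    and "x \<noteq> y" "z \<noteq> w" "z \<noteq> x" "z \<noteq> y" "w \<noteq> x" "w \<noteq> y"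
  shows "\<not> indep {x, z, w}"
proof
  assume "indep {x, z, w}"
  moreover have "card {x, y} < card {x, z, w}"
    using assms by auto
  ultimately obtain e where "e \<in> {z, w}" "indep {x, y, e}"
    using indep_augment[OF indep_pair[OF \<open>x \<in> E\<close> \<open>y \<in> E\<close>]] by (auto simp: insert_commute)
  then show False using assms by auto
qed

lemma line_through_subset:
  assumes "x \<noteq> y" "x \<in> E" "y \<in> E" "u \<in> line_through x y" "u \<noteq> x"
  shows "line_through x y \<subseteq> line_through x u"
proof
  fix z assume z: "z \<in> line_through x y"
  then have zE: "z \<in> E" using line_through_subset_ground by blast
  show "z \<in> line_through x u"
  proof (cases "z = x \<or> z = u \<or> u = y")
    case True
    then show ?thesis using z zE unfolding line_through_def by auto
  next
    case False
    then have ne: "z \<noteq> x" "z \<noteq> u" "u \<noteq> y"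
      by blast+
    then have dep_u: "\<not> indep {x, y, u}"
      using assms dependent_triple_if_mem_line_through by blast
    have "\<not> indep {x, u, z}"
    proof (cases "z = y")
      case True
      then show ?thesis using dep_u by (simp add: insert_commute)
    next
      case False
      then have "\<not> indep {x, y, z}"
        using z ne dependent_triple_if_mem_line_through by blast
      then show ?thesis
        using dependent_triple_exchange[OF dep_u] assms False ne by blast
    qed
    then show ?thesis using mem_line_throughI zE by blast
  qed
qed

lemma line_through_left_eq:
  assumes "x \<noteq> y" "x \<in> E" "y \<in> E" "u \<in> line_through x y" "u \<noteq> x"
  shows "line_through x u = line_through x y"
proof
  show "line_through x y \<subseteq> line_through x u"
    using line_through_subset[OF assms] .
  have uE: "u \<in> E" using assms line_through_subset_ground by blast
  have "y \<in> line_through x u"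
  proof (cases "u = y")
    case True
    then show ?thesis using right_mem_line_through assms by blast
  next
    case False
    then have "\<not> indep {x, u, y}"
      using assms dependent_triple_if_mem_line_through by (metis insert_commute)
    then show ?thesis using mem_line_throughI assms by blast
  qed
  then show "line_through x u \<subseteq> line_through x y"
    using line_through_subset[of x u y] assms uE by blast
qed

lemma line_through_eq:
  assumes "x \<noteq> y" "x \<in> E" "y \<in> E" "u \<in> line_through x y" "v \<in> line_through x y" "u \<noteq> v"
  shows "line_through u v = line_through x y"
proof (cases "u = x")
  case True
  then show ?thesis using line_through_left_eq assms by blast
next
  case False
  have xu: "line_through x u = line_through x y"
    using line_through_left_eq assms False by blast
  have uE: "u \<in> E" using assms line_through_subset_ground by blast
  show ?thesis
  proof (cases "v = x")
    case True
    then show ?thesis using xu line_through_commute by metis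
  next
    case False
    have "v \<in> line_through u x"
      using assms xu line_through_commute by metis
    then have "line_through u v = line_through u x"
      using line_through_left_eq[of u x v] uE assms \<open>u \<noteq> x\<close> by blast
    then show ?thesis using xu line_through_commute by metis
  qed
qed

lemma line_through_unique:
  assumes "x \<noteq> y" "x \<in> E" "y \<in> E" "p \<noteq> q" "p \<in> E" "q \<in> E"
    and "u \<noteq> v" "u \<in> line_through x y" "v \<in> line_through x y"
    and "u \<in> line_through p q" "v \<in> line_through p q"
  shows "line_through x y = line_through p q"
  using line_through_eq assms by metis

lemma mem_line_through_if_dependent:
  assumes "x \<noteq> y" "x \<in> E" "y \<in> E" "s \<in> line_through x y" "t \<in> line_through x y" "s \<noteq> t"
    and "r \<in> E" "\<not> indep {s, t, r}"
  shows "r \<in> line_through x y"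
  using mem_line_throughI[of r s t] line_through_eq[of x y s t] assms by auto

lemma dependent_if_collinear:
  assumes "x \<noteq> y" "x \<in> E" "y \<in> E"
    and "u \<in> line_through x y" "v \<in> line_through x y" "w \<in> line_through x y"
    and "u \<noteq> v" "u \<noteq> w" "v \<noteq> w"
  shows "\<not> indep {u, v, w}"
  using line_through_eq[of x y u v] dependent_triple_if_mem_line_through[of w u v] assms by auto

lemma circuit_collinear_triple:
  assumes "x \<noteq> y" "x \<in> E" "y \<in> E"
    and "u \<in> line_through x y" "v \<in> line_through x y" "w \<in> line_through x y"
    and "u \<noteq> v" "u \<noteq> w" "v \<noteq> w"
  shows "circuit E indep {u, v, w}"
  using circuit_triangle dependent_if_collinear[OF assms] assms line_through_subset_ground
  by blast

lemma card_indep_on_line_le2: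
  assumes "x \<noteq> y" "x \<in> E" "y \<in> E" "I \<subseteq> line_through x y" "indep I"
  shows "card I \<le> 2"
proof (rule ccontr)
  assume "\<not> card I \<le> 2"
  then have "3 \<le> card I" by simp
  then obtain J where "J \<subseteq> I" "card J = 3"
    by (meson obtain_subset_with_card_n)
  then obtain u v w where "J = {u, v, w}" "u \<noteq> v" "v \<noteq> w" "u \<noteq> w"
    by (auto simp: card_3_iff)
  then show False
    using indep_subset[OF \<open>indep I\<close> \<open>J \<subseteq> I\<close>] dependent_if_collinear[of x y u v w]
      assms \<open>J \<subseteq> I\<close> by auto
qed

lemma mrank_line_through:
  assumes "x \<noteq> y" "x \<in> E" "y \<in> E"
  shows "mrank indep (line_through x y) = 2"
proof -
  obtain I where I: "I \<subseteq> line_through x y" "indep I" "card I = mrank indep (line_through x y)"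
    using ex_indep_card_mrank by blast
  have "{x, y} \<subseteq> line_through x y"
    using assms left_mem_line_through right_mem_line_through by blast
  then have "2 \<le> mrank indep (line_through x y)"
    using card_le_mrank[of "{x, y}"] indep_pair assms by fastforce
  then show ?thesis
    using card_indep_on_line_le2[OF assms I(1,2)] I(3) by linarith
qed

lemma line_line_through:
  assumes "x \<noteq> y" "x \<in> E" "y \<in> E"
  shows "line E indep (line_through x y)"
  unfolding line_def flat_def
proof (intro conjI ballI)
  show "line_through x y \<subseteq> E" by (rule line_through_subset_ground)
  show rank2: "mrank indep (line_through x y) = 2"
    using mrank_line_through assms .
  fix e assume e: "e \<in> E - line_through x y"
  then have "e \<noteq> x" "e \<noteq> y"
    using assms left_mem_line_through right_mem_line_through by blast+
  then have "card {x, y, e} = 3"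
    using assms by simp
  moreover have "{x, y, e} \<subseteq> insert e (line_through x y)"
    using assms left_mem_line_through right_mem_line_through by blast
  ultimately have "3 \<le> mrank indep (insert e (line_through x y))"
    using card_le_mrank indep_triple_if_not_mem_line_through e by (metis DiffE)
  then show "mrank indep (line_through x y) < mrank indep (insert e (line_through x y))"
    using rank2 by linarith
qed

lemma triangle_subset_line_through:
  assumes "x \<noteq> y" "x \<in> E" "y \<in> E" "circuit E indep C" "card C = 3"
    and "2 \<le> card (C \<inter> line_through x y)"
  shows "C \<subseteq> line_through x y"
proof -
  obtain D where "D \<subseteq> C \<inter> line_through x y" "card D = 2"
    using assms(6) obtain_subset_with_card_n by metis
  then obtain u v where uv: "u \<noteq> v" "u \<in> C" "v \<in> C" "u \<in> line_through x y" "v \<in> line_through x y"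
    by (auto simp: card_2_iff)
  have "card (C - {u, v}) = 1"
    using uv assms(5) finite_circuit[OF assms(4)] by (simp add: card_Diff_subset)
  then obtain r where r: "C - {u, v} = {r}" by (rule card_1_singletonE)
  then have C: "C = {u, v, r}" using uv by blast
  then have "\<not> indep {u, v, r}" and "r \<in> E"
    using assms(4) circuit_subset_ground unfolding circuit_def by auto
  then have "r \<in> line_through x y"
    using mem_line_through_if_dependent assms uv by blast
  then show ?thesis using C uv by blast
qed

lemma crossing_line_through_avoids:
  assumes "a \<noteq> c" "b \<noteq> c" "a \<in> E" "b \<in> E" "c \<in> E"
    and "d \<in> line_through b c" "d \<notin> line_through a c" "d \<noteq> b"
    and "e \<in> line_through a c" "e \<notin> line_through b c" "e \<noteq> a"
  shows "d \<noteq> e" "a \<notin> line_through d e" "b \<notin> line_through d e"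
proof -
  show "d \<noteq> e"
    using assms(7,9) by blast
  have dE: "d \<in> E" and eE: "e \<in> E"
    using assms(6,9) line_through_subset_ground by blast+
  show "a \<notin> line_through d e"
  proof
    assume "a \<in> line_through d e"
    then have "line_through d e = line_through a c"
      using line_through_unique[OF \<open>d \<noteq> e\<close> dE eE assms(1,3,5) assms(11)[symmetric]]
        right_mem_line_through[OF eE] left_mem_line_through[OF assms(3)] assms(9) by blast
    then show False
      using assms(7) left_mem_line_through[OF dE] by blast
  qed
  show "b \<notin> line_through d e"
  proof
    assume "b \<in> line_through d e"
    then have "line_through d e = line_through b c"
      using line_through_unique[OF \<open>d \<noteq> e\<close> dE eE assms(2,4,5) assms(8)[symmetric]]
        left_mem_line_through[OF dE] left_mem_line_through[OF assms(4)] assms(6) by blast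
    then show False
      using assms(10) right_mem_line_through[OF eE] by blast
  qed
qed

end

locale rank3_simple_matroid = simple_indep_matroid +
  assumes rank3: "mrank indep E = 3"
begin

lemma card_indep_le3: "indep I \<Longrightarrow> card I \<le> 3"
  using card_le_mrank[of I E] indep_subset_ground rank3 by simp

lemma ex_not_mem_line_through:
  assumes "x \<noteq> y" "x \<in> E" "y \<in> E"
  obtains c where "c \<in> E" "c \<notin> line_through x y"
proof -
  obtain I where I: "I \<subseteq> E" "indep I" "card I = 3"
    using ex_indep_card_mrank[of E] rank3 by auto
  have "\<not> I \<subseteq> line_through x y"
    using card_indep_on_line_le2[OF assms _ I(2)] I(3) by auto
  then show ?thesis using that I(1) by blast
qed

lemma card_circuit_3_or_4:
  assumes "circuit E indep C"
  shows "card C = 3 \<or> card C = 4"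
proof -
  have ge3: "3 \<le> card C"
    using card_circuit_ge3[OF assms] .
  then obtain z where z: "z \<in> C"
    by (metis card.empty ex_in_conv not_numeral_le_zero)
  have "indep (C - {z})"
    using assms z unfolding circuit_def by blast
  then have "card (C - {z}) \<le> 3"
    by (rule card_indep_le3)
  then have "card C \<le> 4"
    using z finite_circuit[OF assms] by (simp add: card_Diff_singleton)
  then show ?thesis
    using ge3 by linarith
qed

lemma card_circuit_subset_line_through:
  assumes "x \<noteq> y" "x \<in> E" "y \<in> E" "circuit E indep C" "C \<subseteq> line_through x y"
  shows "card C = 3"
proof (rule ccontr)
  assume "card C \<noteq> 3"
  then have four: "card C = 4"
    using card_circuit_3_or_4[OF assms(4)] by blast
  then obtain z where z: "z \<in> C"
    by (metis card.empty ex_in_conv zero_neq_numeral)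
  have "indep (C - {z})"
    using assms(4) z unfolding circuit_def by blast
  then have "card (C - {z}) \<le> 2"
    using card_indep_on_line_le2[OF assms(1-3)] assms(5) by blast
  then show False
    using four z finite_circuit[OF assms(4)] by (simp add: card_Diff_singleton)
qed

lemma card_circuit_inter_line_through_le2:
  assumes "x \<noteq> y" "x \<in> E" "y \<in> E" "circuit E indep C" "card C = 4"
  shows "card (C \<inter> line_through x y) \<le> 2"
proof -
  have "\<not> C \<subseteq> line_through x y"
    using card_circuit_subset_line_through[OF assms(1-4)] assms(5) by auto
  then have "C \<inter> line_through x y \<subset> C"
    by blast
  then have "indep (C \<inter> line_through x y)"
    using indep_psubset_circuit[OF assms(4)] by blast
  then show ?thesis
    using card_indep_on_line_le2[OF assms(1-3)] by blast
qed

lemma circuit_of_indep_triples: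
  assumes "a \<in> E" "b \<in> E" "c \<in> E" "d \<in> E"
    and "a \<noteq> b" "a \<noteq> c" "a \<noteq> d" "b \<noteq> c" "b \<noteq> d" "c \<noteq> d"
    and "indep {a, b, c}" "indep {a, b, d}" "indep {a, c, d}" "indep {b, c, d}"
  shows "circuit E indep {a, b, c, d}"
proof -
  have "\<not> indep {a, b, c, d}"
    using card_indep_le3 assms by fastforce
  moreover have "{a, b, c, d} - {a} = {b, c, d}" "{a, b, c, d} - {b} = {a, c, d}"
    "{a, b, c, d} - {c} = {a, b, d}" "{a, b, c, d} - {d} = {a, b, c}"
    using assms by auto
  ultimately show ?thesis
    unfolding circuit_def using assms by auto
qed

lemma circuit_of_skew_pairs:
  assumes "x1 \<noteq> x2" "x1 \<in> E" "x2 \<in> E" "y1 \<noteq> y2" "y1 \<in> E" "y2 \<in> E"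
    and "y1 \<notin> line_through x1 x2" "y2 \<notin> line_through x1 x2"
    and "x1 \<notin> line_through y1 y2" "x2 \<notin> line_through y1 y2"
  shows "circuit E indep {x1, x2, y1, y2} \<and> card {x1, x2, y1, y2} = 4"
proof -
  have "x1 \<noteq> y1" "x1 \<noteq> y2" "x2 \<noteq> y1" "x2 \<noteq> y2"
    using assms left_mem_line_through right_mem_line_through by metis+
  moreover have "indep {x1, x2, y1}" "indep {x1, x2, y2}"
    using indep_triple_if_not_mem_line_through assms by auto
  moreover have "indep {x1, y1, y2}" "indep {x2, y1, y2}"
    using indep_triple_if_not_mem_line_through[of x1 y1 y2]
      indep_triple_if_not_mem_line_through[of x2 y1 y2] assms
    by (auto simp: insert_commute)
  ultimately show ?thesis
    using circuit_of_indep_triples[of x1 x2 y1 y2] assms by auto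
qed

lemma triangle_through_base_point:
  assumes "circuit E indep C" "C \<subseteq> line_through p q" "p \<in> C" "p \<noteq> q" "p \<in> E" "q \<in> E"
  obtains u v where "C = {p, u, v}" "u \<noteq> v" "u \<noteq> p" "v \<noteq> p"
proof -
  have "card C = 3"
    using card_circuit_subset_line_through[OF assms(4-6,1,2)] .
  then have "card (C - {p}) = 2"
    using assms(3) finite_circuit[OF assms(1)] by (simp add: card_Diff_singleton)
  then obtain u v where "C - {p} = {u, v}" "u \<noteq> v"
    by (auto simp: card_2_iff)
  then show ?thesis
    using that assms(3) by blast
qed

context
  fixes p x y
  assumes px: "p \<noteq> x" "p \<in> E" "x \<in> E"
    and y: "y \<in> E" "y \<notin> line_through p x"
    and two_lines: "E = line_through p x \<union> line_through p y"
begin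

private lemma py: "p \<noteq> y"
  using y left_mem_line_through px by blast

private lemma lines_inter: "line_through p x \<inter> line_through p y = {p}"
proof -
  have "z = p" if "z \<in> line_through p x" "z \<in> line_through p y" for z
    using line_through_unique[of p x p y p z] that px py y right_mem_line_through
      left_mem_line_through by blast
  then show ?thesis using left_mem_line_through px by blast
qed

private lemma four_circuit_in_pc_circuits:
  assumes C: "circuit E indep C" "card C = 4"
  shows "C \<in> pc_circuits (line_through p x) (restr indep (line_through p x))
                         (line_through p y) (restr indep (line_through p y)) p"
proof -
  let ?L1 = "line_through p x" and ?L2 = "line_through p y"
  have le1: "card (C \<inter> ?L1) \<le> 2" and le2: "card (C \<inter> ?L2) \<le> 2"
    using card_circuit_inter_line_through_le2 C px py y by blast+
  have un: "(C \<inter> ?L1) \<union> (C \<inter> ?L2) = C"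
    using circuit_subset_ground[OF C(1)] two_lines by blast
  have "(C \<inter> ?L1) \<inter> (C \<inter> ?L2) = C \<inter> {p}"
    using lines_inter by blast
  then have "card (C \<inter> ?L1) + card (C \<inter> ?L2) = card C + card (C \<inter> {p})"
    using card_Un_Int[of "C \<inter> ?L1" "C \<inter> ?L2"] finite_circuit[OF C(1)] un by simp
  then have pC: "p \<notin> C" and "card (C \<inter> ?L1) = 2" "card (C \<inter> ?L2) = 2"
    using le1 le2 C(2) by (auto split: if_splits)
  then obtain x1 x2 y1 y2 where X: "C \<inter> ?L1 = {x1, x2}" "x1 \<noteq> x2"
    and Y: "C \<inter> ?L2 = {y1, y2}" "y1 \<noteq> y2"
    by (auto simp: card_2_iff)
  have p: "p \<in> ?L1" "p \<in> ?L2"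
    using left_mem_line_through px by blast+
  have xs: "x1 \<in> ?L1" "x2 \<in> ?L1" "x1 \<noteq> p" "x2 \<noteq> p"
    and ys: "y1 \<in> ?L2" "y2 \<in> ?L2" "y1 \<noteq> p" "y2 \<noteq> p"
    using X Y pC by blast+
  have "circuit E indep {p, x1, x2}"
    using circuit_collinear_triple[OF px p(1) xs(1,2)] xs(3,4) X(2) by simp
  then have C1: "circuit ?L1 (restr indep ?L1) {p, x1, x2}"
    using circuit_restr_iff[OF line_through_subset_ground] p xs by simp
  have "circuit E indep {p, y1, y2}"
    using circuit_collinear_triple[OF py px(2) y(1) p(2) ys(1,2)] ys(3,4) Y(2) by simp
  then have C2: "circuit ?L2 (restr indep ?L2) {p, y1, y2}"
    using circuit_restr_iff[OF line_through_subset_ground] p ys by simp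
  have "C = ({p, x1, x2} - {p}) \<union> ({p, y1, y2} - {p})"
    using X Y un pC by auto
  then show ?thesis
    unfolding pc_circuits_def using C1 C2 by blast
qed

private lemma circuit_in_pc_circuits:
  assumes C: "circuit E indep C"
  shows "C \<in> pc_circuits (line_through p x) (restr indep (line_through p x))
                         (line_through p y) (restr indep (line_through p y)) p"
proof (cases "card C = 3")
  case True
  let ?L1 = "line_through p x" and ?L2 = "line_through p y"
  have "C = (C \<inter> ?L1) \<union> (C \<inter> ?L2)"
    using circuit_subset_ground[OF C] two_lines by blast
  then have "card C \<le> card (C \<inter> ?L1) + card (C \<inter> ?L2)"
    by (metis card_Un_le)
  then have "2 \<le> card (C \<inter> ?L1) \<or> 2 \<le> card (C \<inter> ?L2)"
    using True by linarith
  then have "C \<subseteq> ?L1 \<or> C \<subseteq> ?L2"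
    using triangle_subset_line_through[OF _ _ _ C True] px py y by blast
  then have "circuit ?L1 (restr indep ?L1) C \<or> circuit ?L2 (restr indep ?L2) C"
    using circuit_restr_iff[OF line_through_subset_ground] C by blast
  then show ?thesis
    unfolding pc_circuits_def by blast
next
  case False
  then show ?thesis
    using four_circuit_in_pc_circuits card_circuit_3_or_4 C by blast
qed

private lemma pc_circuit_is_circuit:
  assumes "C \<in> pc_circuits (line_through p x) (restr indep (line_through p x))
                           (line_through p y) (restr indep (line_through p y)) p"
  shows "circuit E indep C"
proof -
  let ?L1 = "line_through p x" and ?L2 = "line_through p y"
  have restr1: "circuit ?L1 (restr indep ?L1) D \<longleftrightarrow> D \<subseteq> ?L1 \<and> circuit E indep D"
    and restr2: "circuit ?L2 (restr indep ?L2) D \<longleftrightarrow> D \<subseteq> ?L2 \<and> circuit E indep D" for D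
    using circuit_restr_iff[OF line_through_subset_ground] by blast+
  consider "circuit ?L1 (restr indep ?L1) C" | "circuit ?L2 (restr indep ?L2) C"
    | C1 C2 where "C = (C1 - {p}) \<union> (C2 - {p})" "circuit ?L1 (restr indep ?L1) C1"
        "circuit ?L2 (restr indep ?L2) C2" "p \<in> C1" "p \<in> C2"
    using assms unfolding pc_circuits_def by blast
  then show ?thesis
  proof cases
    case (3 C1 C2)
    then have C1: "circuit E indep C1" "C1 \<subseteq> ?L1" and C2: "circuit E indep C2" "C2 \<subseteq> ?L2"
      using restr1 restr2 by blast+
    obtain x1 x2 where X: "C1 = {p, x1, x2}" "x1 \<noteq> x2" "x1 \<noteq> p" "x2 \<noteq> p"
      using triangle_through_base_point[OF C1 3(4) px] .
    obtain y1 y2 where Y: "C2 = {p, y1, y2}" "y1 \<noteq> y2" "y1 \<noteq> p" "y2 \<noteq> p"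
      using triangle_through_base_point[OF C2 3(5) py px(2) y(1)] .
    have xs: "x1 \<in> ?L1" "x2 \<in> ?L1" and ys: "y1 \<in> ?L2" "y2 \<in> ?L2"
      using X(1) Y(1) C1(2) C2(2) by blast+
    have L1: "line_through x1 x2 = ?L1"
      using line_through_eq[OF px(1-3) xs X(2)] .
    have L2: "line_through y1 y2 = ?L2"
      using line_through_eq[OF py px(2) y(1) ys Y(2)] .
    have "y1 \<notin> ?L1" "y2 \<notin> ?L1" "x1 \<notin> ?L2" "x2 \<notin> ?L2"
      using lines_inter xs ys X(3,4) Y(3,4) by blast+
    moreover have "x1 \<in> E" "x2 \<in> E" "y1 \<in> E" "y2 \<in> E"
      using xs ys line_through_subset_ground by blast+
    ultimately have "circuit E indep {x1, x2, y1, y2}"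
      using circuit_of_skew_pairs[of x1 x2 y1 y2] L1 L2 X(2) Y(2) by simp
    moreover have "C = {x1, x2, y1, y2}"
      using 3(1) X Y by auto
    ultimately show ?thesis by simp
  qed (use restr1 restr2 in blast)+
qed

lemma parallel_connection_of_union_of_lines: "parallel_connection_of_two_lines E indep p"
  unfolding parallel_connection_of_two_lines_def
  using line_line_through px py y lines_inter two_lines
    circuit_in_pc_circuits pc_circuit_is_circuit by blast

end

lemma four_circuit_or_parallel_connection_distinct:
  assumes "a \<noteq> b" "a \<in> E" "b \<in> E"
  shows "(\<exists>C. circuit E indep C \<and> card C = 4 \<and> a \<in> C \<and> b \<in> C)
         \<or> parallel_connection_of_two_lines E indep a
         \<or> parallel_connection_of_two_lines E indep b"
proof (rule ccontr)
  assume contra: "\<not> ?thesis"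
  have no_skew_pair: "a \<in> line_through d e \<or> b \<in> line_through d e"
    if "d \<in> E" "e \<in> E" "d \<noteq> e" "d \<notin> line_through a b" "e \<notin> line_through a b" for d e
    using circuit_of_skew_pairs[of a b d e] assms that contra by blast
  obtain c where c: "c \<in> E" "c \<notin> line_through a b"
    using ex_not_mem_line_through assms by blast
  have ca: "a \<noteq> c" "b \<noteq> c"
    using c left_mem_line_through right_mem_line_through assms by blast+
  have cover: "d \<in> line_through a c \<or> d \<in> line_through b c"
    if d: "d \<in> E" "d \<notin> line_through a b" for d
  proof (cases "d = c")
    case True
    then show ?thesis using right_mem_line_through c by blast
  next
    case False
    then have "a \<in> line_through c d \<or> b \<in> line_through c d"
      using no_skew_pair c d by blast
    then show ?thesis
      using line_through_left_eq[of c d a] line_through_left_eq[of c d b] c d False ca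
        right_mem_line_through line_through_commute by metis
  qed
  obtain d where d: "d \<in> E" "d \<notin> line_through a b" "d \<notin> line_through a c"
    using parallel_connection_of_union_of_lines[of a b c] assms c contra
      line_through_subset_ground by blast
  have "E \<noteq> line_through b a \<union> line_through b c"
    using parallel_connection_of_union_of_lines[of b a c] assms c contra
      line_through_commute by metis
  then obtain e where e: "e \<in> E" "e \<notin> line_through a b" "e \<notin> line_through b c"
    using line_through_subset_ground line_through_commute by blast
  have "d \<in> line_through b c" "e \<in> line_through a c"
    using cover d e by blast+
  moreover have "d \<noteq> b" "e \<noteq> a"
    using d(2) e(2) assms left_mem_line_through right_mem_line_through by blast+
  ultimately have "d \<noteq> e" "a \<notin> line_through d e" "b \<notin> line_through d e"
    using crossing_line_through_avoids[OF ca assms(2,3) c(1)] d(3) e(3) by blast+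
  then show False
    using no_skew_pair d(1,2) e(1,2) by blast
qed

lemma four_circuit_through_point_of_long_line:
  assumes "a \<noteq> x" "a \<in> E" "x \<in> E"
    and "x' \<in> line_through a x" "x' \<noteq> a" "x' \<noteq> x"
    and "\<not> parallel_connection_of_two_lines E indep a"
  shows "\<exists>C. circuit E indep C \<and> card C = 4 \<and> a \<in> C"
proof -
  obtain y where y: "y \<in> E" "y \<notin> line_through a x"
    using ex_not_mem_line_through[OF assms(1-3)] by blast
  have "E \<noteq> line_through a x \<union> line_through a y"
    using parallel_connection_of_union_of_lines[OF assms(1-3) y] assms(7) by blast
  then obtain z where z: "z \<in> E" "z \<notin> line_through a x" "z \<notin> line_through a y"
    using line_through_subset_ground by blast
  have "y \<noteq> z" "y \<noteq> a"
    using z(3) y right_mem_line_through left_mem_line_through assms(2) by blast+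
  have "\<not> (x \<in> line_through y z \<and> x' \<in> line_through y z)"
  proof
    assume "x \<in> line_through y z \<and> x' \<in> line_through y z"
    then have "line_through a x = line_through y z"
      using line_through_unique[OF assms(1-3) \<open>y \<noteq> z\<close> y(1) z(1) assms(6)[symmetric]]
        right_mem_line_through[OF assms(3)] assms(4) by blast
    then show False
      using y left_mem_line_through by blast
  qed
  then obtain w where w: "w \<in> {x, x'}" "w \<notin> line_through y z"
    by blast
  have "w \<in> E" "a \<noteq> w"
    using w assms line_through_subset_ground by blast+
  have "line_through a w = line_through a x"
    using w line_through_left_eq[OF assms(1-5)] by blast
  have "a \<notin> line_through y z"
  proof
    assume "a \<in> line_through y z"
    then have "line_through y a = line_through y z"
      using line_through_left_eq[OF \<open>y \<noteq> z\<close> y(1) z(1)] \<open>y \<noteq> a\<close> by blast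
    then show False
      using z(1,3) right_mem_line_through line_through_commute by metis
  qed
  then have "circuit E indep {a, w, y, z} \<and> card {a, w, y, z} = 4"
    using circuit_of_skew_pairs[OF \<open>a \<noteq> w\<close> assms(2) \<open>w \<in> E\<close> \<open>y \<noteq> z\<close> y(1) z(1)]
      \<open>line_through a w = line_through a x\<close> y(2) z(2) w(2) by simp
  then show ?thesis by blast
qed

lemma four_circuit_or_parallel_connection_point:
  assumes "connected_matroid E indep" "a \<in> E"
  shows "(\<exists>C. circuit E indep C \<and> card C = 4 \<and> a \<in> C)
         \<or> parallel_connection_of_two_lines E indep a"
proof -
  obtain I where "I \<subseteq> E" "indep I" "card I = 3"
    using ex_indep_card_mrank[of E] rank3 by auto
  then have "\<not> I \<subseteq> {a}"
    using card_mono[of "{a}" I] by fastforce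
  then obtain x where x: "x \<in> E" "a \<noteq> x"
    using \<open>I \<subseteq> E\<close> by blast
  obtain C where C: "circuit E indep C" "a \<in> C" "x \<in> C"
    using assms x unfolding connected_matroid_def by metis
  show ?thesis
  proof (cases "card C = 4")
    case True
    then show ?thesis using C by blast
  next
    case False
    then have "card C = 3"
      using card_circuit_3_or_4 C(1) by blast
    moreover have "card {a, x} = 2"
      using x by simp
    ultimately have "\<not> C \<subseteq> {a, x}"
      using card_mono[of "{a, x}" C] by auto
    then obtain x' where x': "x' \<in> C" "x' \<noteq> a" "x' \<noteq> x"
      by blast
    have "{a, x} \<subseteq> C \<inter> line_through a x"
      using C x assms left_mem_line_through right_mem_line_through by blast
    then have "2 \<le> card (C \<inter> line_through a x)"
      using card_mono[of "C \<inter> line_through a x" "{a, x}"] finite_circuit[OF C(1)]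
        \<open>card {a, x} = 2\<close> by simp
    then have "x' \<in> line_through a x"
      using triangle_subset_line_through[OF x(2) assms(2) x(1) C(1) \<open>card C = 3\<close>] x' by blast
    then show ?thesis
      using four_circuit_through_point_of_long_line[OF x(2) assms(2) x(1) _ x'(2,3)] by blast
  qed
qed

end

theorem lemma3p1:
  fixes E :: "'a set" and indep :: "'a set \<Rightarrow> bool" and a b :: 'a
  assumes "matroid E indep"
    and "connected_matroid E indep"
    and "simple_matroid E indep"
    and "mrank indep E = 3"
    and "a \<in> E" and "b \<in> E"
  shows "(\<exists>C. circuit E indep C \<and> card C = 4 \<and> a \<in> C \<and> b \<in> C)
         \<or> parallel_connection_of_two_lines E indep a
         \<or> parallel_connection_of_two_lines E indep b"
proof -
  interpret rank3_simple_matroid E indep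
    using assms(1,3,4) by unfold_locales
  show ?thesis
  proof (cases "a = b")
    case True
    then show ?thesis
      using four_circuit_or_parallel_connection_point[OF assms(2,5)] by blast
  next
    case False
    then show ?thesis
      using four_circuit_or_parallel_connection_distinct assms(5,6) by blast
  qed
qed

end
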